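(* Fix $i\in[n]$ and $\mathbf{x}_{-i}\in\mathcal{C}_{-i}$, let $A=A(\mathbf{x}_{-i})$ and $\mathcal{R}_A=\prod_{j\in A}(0,\omega_{ij}-\mathbf{x}_T^{j|i})$. Then the function $(x_{ij})_{j\in A}\mapsto\sum_{j\in A}x_{ij}^{a_i}\mathcal{F}_{ij}(x_{ij}+\mathbf{x}_T^{j|i})$ is concave on $\mathcal{R}_A$.
   Context: Fragile multi-CPR Game: $n,m\ge1$, $[k]=\{1,\dots,k\}$, $C_m=\{(x_1,\dots,x_m)\in[0,1]^m:\sum_j x_j\le1\}$, $\mathcal{C}_{-i}=\prod_{[n]\setminus\{i\}}C_m$; for $\mathbf{x}_{-i}=(\mathbf{x}_\ell)_{\ell\ne i}$ with $\mathbf{x}_\ell=(x_{\ell1},\dots,x_{\ell m})$ put $\mathbf{x}_T^{j|i}=\sum_{\ell\ne i}x_{\ell j}$. Each CPR $j$ has a return rate $\mathcal{R}_j(t)>1$ and failure probability $p_j(t)\in[0,1]$; each player $i$ has parameters $a_i,k_i$. Effective rate: $\mathcal{F}_{ij}(t)=(\mathcal{R}_j(t)-1)^{a_i}(1-p_j(t))-k_ip_j(t)$. Assumption: (1) $p_j(0)=0$, $p_j(t)=1$ for $t\ge1$; (2) $a_i\in(0,1]$, $k_i>0$; (3) each $\mathcal{F}_{ij}$ (continuous on $[0,1]$) has strictly negative first and second derivatives on $(0,1)$. Let $\omega_{ij}\in(0,1)$ be the unique zero of $\mathcal{F}_{ij}$ in $(0,1)$ (so $\mathcal{F}_{ij}>0$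 on $[0,\omega_{ij})$). Active CPRs: $A(\mathbf{x}_{-i})=\{j\in[m]:\mathbf{x}_T^{j|i}<\omega_{ij}\}$. *)

theory Defs
  imports "HOL-Analysis.Analysis"
begin

text \<open>Players are indexed by a finite type 'n, CPRs by a finite type 'm
  (so n = CARD('n) \<ge> 1, m = CARD('m) \<ge> 1).  A strategy profile is
  x :: 'n \<Rightarrow> 'm \<Rightarrow> real, with x l j the investment of player l in CPR j.\<close>

definition in_simplex :: "('m::finite \<Rightarrow> real) \<Rightarrow> bool" where
  "in_simplex v \<longleftrightarrow> (\<forall>j. 0 \<le> v j \<and> v j \<le> 1) \<and> (\<Sum>j\<in>UNIV. v j) \<le> 1"

definition others_feasible :: "('n::finite \<Rightarrow> 'm::finite \<Rightarrow> real) \<Rightarrow> 'n \<Rightarrow> bool" where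
  "others_feasible x i \<longleftrightarrow> (\<forall>l. l \<noteq> i \<longrightarrow> in_simplex (x l))"

definition total_others :: "('n::finite \<Rightarrow> 'm \<Rightarrow> real) \<Rightarrow> 'n \<Rightarrow> 'm \<Rightarrow> real" where
  "total_others x i j = (\<Sum>l\<in>UNIV - {i}. x l j)"

definition Feff :: "('m \<Rightarrow> real \<Rightarrow> real) \<Rightarrow> ('m \<Rightarrow> real \<Rightarrow> real) \<Rightarrow> ('n \<Rightarrow> real) \<Rightarrow> ('n \<Rightarrow> real)
    \<Rightarrow> 'n \<Rightarrow> 'm \<Rightarrow> real \<Rightarrow> real" where
  "Feff R p a k i j t = (R j t - 1) powr (a i) * (1 - p j t) - k i * p j t"

definition omega :: "('m \<Rightarrow> real \<Rightarrow> real) \<Rightarrow> ('m \<Rightarrow> real \<Rightarrow> real) \<Rightarrow> ('n \<Rightarrow> real) \<Rightarrow> ('n \<Rightarrow> real)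
    \<Rightarrow> 'n \<Rightarrow> 'm \<Rightarrow> real" where
  "omega R p a k i j = (THE w. 0 < w \<and> w < 1 \<and> Feff R p a k i j w = 0)"

definition active :: "('m \<Rightarrow> real \<Rightarrow> real) \<Rightarrow> ('m \<Rightarrow> real \<Rightarrow> real) \<Rightarrow> ('n::finite \<Rightarrow> real) \<Rightarrow> ('n \<Rightarrow> real)
    \<Rightarrow> ('n \<Rightarrow> 'm::finite \<Rightarrow> real) \<Rightarrow> 'n \<Rightarrow> 'm set" where
  "active R p a k x i = {j. total_others x i j < omega R p a k i j}"

text \<open>The box R_A = prod_{j in A} (0, omega_ij - x_T^{j|i}), embedded in real^'m
  by setting the coordinates outside A to 0.\<close>
definition box_A :: "('m \<Rightarrow> real \<Rightarrow> real) \<Rightarrow> ('m \<Rightarrow> real \<Rightarrow> real) \<Rightarrow> ('n::finite \<Rightarrow> real) \<Rightarrow> ('n \<Rightarrow> real)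
    \<Rightarrow> ('n \<Rightarrow> 'm::finite \<Rightarrow> real) \<Rightarrow> 'n \<Rightarrow> (real^'m) set" where
  "box_A R p a k x i = {y. \<forall>j. (j \<in> active R p a k x i \<longrightarrow>
        0 < y $ j \<and> y $ j < omega R p a k i j - total_others x i j)
      \<and> (j \<notin> active R p a k x i \<longrightarrow> y $ j = 0)}"

definition utility_A :: "('m \<Rightarrow> real \<Rightarrow> real) \<Rightarrow> ('m \<Rightarrow> real \<Rightarrow> real) \<Rightarrow> ('n::finite \<Rightarrow> real) \<Rightarrow> ('n \<Rightarrow> real)
    \<Rightarrow> ('n \<Rightarrow> 'm::finite \<Rightarrow> real) \<Rightarrow> 'n \<Rightarrow> real^'m \<Rightarrow> real" where
  "utility_A R p a k x i y = (\<Sum>j\<in>active R p a k x i.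
      (y $ j) powr (a i) * Feff R p a k i j (y $ j + total_others x i j))"

end

theory Submission
  imports Defs
begin

text \<open>Each summand depends on one coordinate only. On \<open>(0, \<omega> - T)\<close> it is the product of
  \<open>t powr a\<close>, which is concave, increasing and nonnegative, with \<open>t \<mapsto> F (t + T)\<close>, which
  is concave (\<open>F'' < 0\<close>), decreasing (\<open>F' < 0\<close>) and nonnegative because \<open>t + T\<close> stays below
  the root \<open>\<omega>\<close> of \<open>F\<close>; such a product of concave functions is again concave. A sum of
  concave functions of distinct coordinates is concave on the product of the coordinate
  intervals.\<close>

lemma strict_antimono_on_of_deriv_neg:
  fixes F F' :: "real \<Rightarrow> real"
  assumes cont: "continuous_on {a..b} F"
    and deriv: "\<And>t. t \<in> {a<..<b} \<Longrightarrow> (F has_real_derivative F' t) (at t) \<and> F' t < 0"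
  shows "strict_antimono_on {a..b} F"
proof (rule monotone_onI)
  fix s t assume st: "s \<in> {a..b}" "t \<in> {a..b}" "s < t"
  show "F t < F s"
  proof (rule DERIV_neg_imp_decreasing_open[OF \<open>s < t\<close>])
    show "continuous_on {s..t} F"
      using st by (intro continuous_on_subset[OF cont]) auto
    show "\<exists>y. (F has_real_derivative y) (at r) \<and> y < 0" if "s < r" "r < t" for r
      using deriv[of r] st that by auto
  qed
qed

lemma ex1_root_of_strict_antimono_on:
  fixes F :: "real \<Rightarrow> real"
  assumes "a \<le> b" "continuous_on {a..b} F" and dec: "strict_antimono_on {a..b} F"
    and "F a > 0" "F b < 0"
  shows "\<exists>!w. a < w \<and> w < b \<and> F w = 0"
proof -
  obtain w where w: "a \<le> w" "w \<le> b" "F w = 0"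
    using IVT2'[of F b 0 a] assms by auto
  with assms have "a < w" "w < b"
    by (auto simp: le_less)
  moreover have "z = w" if "a < z" "z < b" "F z = 0" for z
  proof (rule ccontr)
    assume "z \<noteq> w"
    then have "F z \<noteq> F w"
      using monotone_onD[OF dec, of z w] monotone_onD[OF dec, of w z] that w by force
    with that w show False by simp
  qed
  ultimately show ?thesis
    using w by blast
qed

lemma concave_on_powr:
  assumes "0 \<le> \<alpha>" "\<alpha> \<le> 1"
  shows "concave_on {0<..} (\<lambda>y::real. y powr \<alpha>)"
proof (rule f''_le0_imp_concave)
  fix y :: real assume "y \<in> {0<..}"
  then show "((\<lambda>y. y powr \<alpha>) has_real_derivative \<alpha> * y powr (\<alpha> - 1)) (at y)"
    and "((\<lambda>y. \<alpha> * y powr (\<alpha> - 1)) has_real_derivative \<alpha> * ((\<alpha> - 1) * y powr (\<alpha> - 1 - 1))) (at y)"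
    by (auto intro!: derivative_eq_intros)
  show "\<alpha> * ((\<alpha> - 1) * y powr (\<alpha> - 1 - 1)) \<le> 0"
    using assms by (intro mult_nonneg_nonpos mult_nonpos_nonneg) auto
qed simp

lemma concave_on_powr_mult:
  fixes f :: "real \<Rightarrow> real"
  assumes "concave_on {0<..<c} f" "antimono_on {0<..<c} f" "f \<in> {0<..<c} \<rightarrow> {0..}"
    and "0 \<le> \<alpha>" "\<alpha> \<le> 1"
  shows "concave_on {0<..<c} (\<lambda>y. y powr \<alpha> * f y)"
proof (rule concave_on_mul)
  show "concave_on {0<..<c} (\<lambda>y. y powr \<alpha>)"
    using concave_on_powr[OF assms(4,5)] unfolding concave_on_def
    by (rule convex_on_subset) auto
  show "mono_on {0<..<c} (\<lambda>y. y powr \<alpha>)"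
    using assms(4) by (auto intro!: monotone_onI powr_mono2)
qed (use assms in auto)

lemma concave_on_translate:
  fixes f :: "'a::real_vector \<Rightarrow> real"
  assumes "concave_on S f" "convex T" "\<And>x. x \<in> T \<Longrightarrow> x + c \<in> S"
  shows "concave_on T (\<lambda>x. f (x + c))"
  unfolding concave_on_iff
proof (intro conjI ballI allI impI)
  fix x y and u v :: real
  assume "x \<in> T" "y \<in> T" "0 \<le> u" "0 \<le> v" "u + v = 1"
  then have "u * f (x + c) + v * f (y + c) \<le> f (u *\<^sub>R (x + c) + v *\<^sub>R (y + c))"
    using assms unfolding concave_on_iff by blast
  also have "u *\<^sub>R (x + c) + v *\<^sub>R (y + c) = u *\<^sub>R x + v *\<^sub>R y + c"
    using \<open>u + v = 1\<close> by (simp add: algebra_simps flip: scaleR_add_left)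
  finally show "u * f (x + c) + v * f (y + c) \<le> f (u *\<^sub>R x + v *\<^sub>R y + c)" .
qed (fact \<open>convex T\<close>)

lemma concave_on_linear_image:
  assumes "linear h" "convex S" "concave_on U g" "h ` S \<subseteq> U"
  shows "concave_on S (\<lambda>x. g (h x))"
  using assms unfolding concave_on_iff
  by (simp add: image_subset_iff linear_add linear_scale)

lemma concave_on_sum_fun:
  assumes "finite A" "convex S" "\<And>j. j \<in> A \<Longrightarrow> concave_on S (f j)"
  shows "concave_on S (\<lambda>x. \<Sum>j\<in>A. f j x)"
  using assms
  by (induction A rule: finite_induct) (simp_all add: concave_on_const concave_on_add)

lemma omega_root:
  assumes "continuous_on {0..1} (Feff R p a k i j)"
    and "\<And>t. t \<in> {0<..<1} \<Longrightarrow> (Feff R p a k i j has_real_derivative F' t) (at t) \<and> F' t < 0"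
    and "Feff R p a k i j 0 > 0" "Feff R p a k i j 1 < 0"
  shows "0 < omega R p a k i j \<and> omega R p a k i j < 1 \<and> Feff R p a k i j (omega R p a k i j) = 0"
proof -
  have "strict_antimono_on {0..1} (Feff R p a k i j)"
    using assms(1,2) by (rule strict_antimono_on_of_deriv_neg)
  with assms have "\<exists>!w. 0 < w \<and> w < 1 \<and> Feff R p a k i j w = 0"
    by (intro ex1_root_of_strict_antimono_on) auto
  then show ?thesis
    unfolding omega_def by (rule theI')
qed

lemma concave_on_powr_mult_shift:
  fixes F F' F'' :: "real \<Rightarrow> real"
  assumes cont: "continuous_on {0..1} F"
    and deriv: "\<And>t. t \<in> {0<..<1} \<Longrightarrow> (F has_real_derivative F' t) (at t) \<and> F' t < 0 \<and>
        (F' has_real_derivative F'' t) (at t) \<and> F'' t < 0"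
    and w: "F w = 0" "w \<le> 1" and T: "0 \<le> T" "T < w" and \<alpha>: "0 \<le> \<alpha>" "\<alpha> \<le> 1"
  shows "concave_on {0<..<w - T} (\<lambda>y. y powr \<alpha> * F (y + T))"
proof (rule concave_on_powr_mult[OF _ _ _ \<alpha>])
  have "concave_on {0<..<1} F"
    using deriv by (intro f''_le0_imp_concave) (auto intro: less_imp_le)
  then show "concave_on {0<..<w - T} (\<lambda>y. F (y + T))"
    by (rule concave_on_translate) (use T w in auto)
  have "strict_antimono_on {0..1} F"
    using deriv by (intro strict_antimono_on_of_deriv_neg[OF cont]) blast
  then have dec: "F (z + T) < F (y + T)" if "0 \<le> y" "y < z" "z \<le> w - T" for y z
    by (rule monotone_onD) (use that T w in auto)
  show "antimono_on {0<..<w - T} (\<lambda>y. F (y + T))"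
    by (intro monotone_onI) (auto simp: le_less intro: dec)
  show "(\<lambda>y. F (y + T)) \<in> {0<..<w - T} \<rightarrow> {0..}"
    using dec[of _ "w - T"] w by (fastforce intro: less_imp_le)
qed

lemma concave_on_utility_term:
  assumes "R j 0 > 1" "p j 0 = 0" "p j 1 = 1" "k i > 0" "0 < a i" "a i \<le> 1"
    and cont: "continuous_on {0..1} (Feff R p a k i j)"
    and "\<exists>F' F''. \<forall>t\<in>{0<..<1}.
        (Feff R p a k i j has_real_derivative F' t) (at t) \<and> F' t < 0 \<and>
        (F' has_real_derivative F'' t) (at t) \<and> F'' t < 0"
    and T: "0 \<le> T" "T < omega R p a k i j"
  shows "concave_on {0<..<omega R p a k i j - T} (\<lambda>t. t powr a i * Feff R p a k i j (t + T))"
proof -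
  obtain F' F'' where deriv: "\<And>t. t \<in> {0<..<1} \<Longrightarrow>
      (Feff R p a k i j has_real_derivative F' t) (at t) \<and> F' t < 0 \<and>
      (F' has_real_derivative F'' t) (at t) \<and> F'' t < 0"
    using assms(8) by blast
  have "Feff R p a k i j 0 > 0" "Feff R p a k i j 1 < 0"
    using assms(1-4) by (simp_all add: Feff_def)
  with deriv have root: "omega R p a k i j < 1" "Feff R p a k i j (omega R p a k i j) = 0"
    using omega_root[OF cont] by blast+
  show ?thesis
    using concave_on_powr_mult_shift[OF cont deriv root(2) _ T] root(1) assms(5,6) by simp
qed

lemma total_others_nonneg:
  assumes "others_feasible x i"
  shows "0 \<le> total_others x i j"
  using assms unfolding total_others_def others_feasible_def in_simplex_def
  by (intro sum_nonneg) auto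

theorem theorem5:
  fixes R p :: "'m::finite \<Rightarrow> real \<Rightarrow> real"
    and a k :: "'n::finite \<Rightarrow> real"
    and x :: "'n \<Rightarrow> 'm \<Rightarrow> real"
    and i :: 'n
  assumes R_gt1: "\<And>j t. t \<ge> 0 \<Longrightarrow> R j t > 1"
    and p_range: "\<And>j t. t \<ge> 0 \<Longrightarrow> 0 \<le> p j t \<and> p j t \<le> 1"
    and p0: "\<And>j. p j 0 = 0"
    and p1: "\<And>j t. t \<ge> 1 \<Longrightarrow> p j t = 1"
    and a_range: "\<And>l. 0 < a l \<and> a l \<le> 1"
    and k_pos: "\<And>l. k l > 0"
    and F_cont: "\<And>l j. continuous_on {0..1} (Feff R p a k l j)"
    and F_deriv: "\<And>l j. \<exists>F' F''. \<forall>t\<in>{0<..<1}.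
        (Feff R p a k l j has_real_derivative F' t) (at t) \<and> F' t < 0 \<and>
        (F' has_real_derivative F'' t) (at t) \<and> F'' t < 0"
    and feas: "others_feasible x i"
  shows "concave_on (box_A R p a k x i) (utility_A R p a k x i)"
proof -
  define A where "A = active R p a k x i"
  define T where "T = total_others x i"
  define I where "I j = (if j \<in> A then {0<..<omega R p a k i j - T j} else {0})" for j
  have box: "box_A R p a k x i = {y. \<forall>j. y $ j \<in> I j}"
    by (auto simp: box_A_def I_def A_def T_def)
  have convex_box: "convex {y. \<forall>j. y $ j \<in> I j}"
    by (rule convex_box_cart) (simp add: I_def)
  have "concave_on (I j) (\<lambda>t. t powr a i * Feff R p a k i j (t + T j))" if "j \<in> A" for j
    using that R_gt1[of 0 j] p0[of j] p1[of 1 j] k_pos[of i] a_range[of i]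
      total_others_nonneg[OF feas, of j]
    by (auto simp: I_def A_def T_def active_def intro!: concave_on_utility_term F_cont F_deriv)
  then show ?thesis
    unfolding box utility_A_def A_def[symmetric] T_def[symmetric]
    using convex_box
    by (intro concave_on_sum_fun concave_on_linear_image[OF bounded_linear.linear[OF bounded_linear_vec_nth]])
      auto
qed

end
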